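(* Let $0<\alpha<1$, $K_0>1$, and let $F=(F_1,F_2)$ be a $C^1$ map defined near a point $z\in\mathbb R^2$ with $DF_z$ invertible, such that at $z$: (H1) $|F_{2x}|+\alpha|F_{2y}|+\alpha^2|F_{1y}|\le\alpha|F_{1x}|$; (H2) $|F_{1x}|-\alpha|F_{1y}|\ge K_0$; (H3) $|F_{1y}|+\alpha|F_{2y}|+\alpha^2|F_{2x}|\le\alpha|F_{1x}|$; (H4) $|F_{1x}|-\alpha|F_{2x}|\ge J_F(z)K_0$, where $J_F(z)=|F_{1x}F_{2y}-F_{1y}F_{2x}|$. Then, with $K^u_\alpha=\{(v_1,v_2):|v_2|\le\alpha|v_1|\}$, $K^s_\alpha=\{(v_1,v_2):|v_1|\le\alpha|v_2|\}$ and the max norm $|(v_1,v_2)|=\max(|v_1|,|v_2|)$: $DF_z(K^u_\alpha)\subseteq K^u_\alpha$; $|DF_zv|\ge K_0|v|$ for $v\in K^u_\alpha$; $DF_z^{-1}(K^s_\alpha)\subseteq K^s_\alpha$; and $|DF_z^{-1}v|\ge K_0|v|$ for $v\in K^s_\alpha$.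
   Context: All partial derivatives are evaluated at $z$. Tangent spaces are identified with $\mathbb R^2$. *)

theory Defs
  imports "HOL-Analysis.Analysis"
begin

definition maxnorm :: "real \<times> real \<Rightarrow> real" where
  "maxnorm v = max \<bar>fst v\<bar> \<bar>snd v\<bar>"

definition cone_u :: "real \<Rightarrow> (real \<times> real) set" where
  "cone_u \<alpha> = {v. \<bar>snd v\<bar> \<le> \<alpha> * \<bar>fst v\<bar>}"

definition cone_s :: "real \<Rightarrow> (real \<times> real) set" where
  "cone_s \<alpha> = {v. \<bar>fst v\<bar> \<le> \<alpha> * \<bar>snd v\<bar>}"

end

theory Submission
  imports Defs
begin

text \<open>
  Only the linear map \<open>DF\<^sub>z\<close> matters.
  On \<open>K\<^sup>u\<^sub>\<alpha>\<close> the max norm of \<open>v\<close> is \<open>|v\<^sub>1|\<close>, and for the matrix \<open>((a, b), (c, d))\<close>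
  the first image coordinate is at least \<open>(|a| - \<alpha>|b|)|v\<^sub>1|\<close> while the second is at most
  \<open>(|c| + \<alpha>|d|)|v\<^sub>1|\<close>; (H1) and (H2) compare these bounds.
  The inverse is the adjugate divided by the determinant \<open>D\<close>, and conjugating it by the
  coordinate swap, which exchanges \<open>K\<^sup>s\<^sub>\<alpha>\<close> and \<open>K\<^sup>u\<^sub>\<alpha>\<close>, gives the matrix
  \<open>((a, -c), (-b, d)) / D\<close>; for it (H3) and (H4) are exactly the same two conditions.
\<close>

definition matrix2 :: "real \<Rightarrow> real \<Rightarrow> real \<Rightarrow> real \<Rightarrow> real \<times> real \<Rightarrow> real \<times> real" where
  "matrix2 a b c d = (\<lambda>(x, y). (a * x + b * y, c * x + d * y))"

lemma matrix2_apply: "matrix2 a b c d (x, y) = (a * x + b * y, c * x + d * y)"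
  by (simp add: matrix2_def)

lemma linear_eq_matrix2:
  fixes L :: "real \<times> real \<Rightarrow> real \<times> real"
  assumes "linear L"
  shows "L = matrix2 (fst (L (1, 0))) (fst (L (0, 1))) (snd (L (1, 0))) (snd (L (0, 1)))"
proof
  fix v :: "real \<times> real"
  obtain x y where v: "v = (x, y)" by (cases v)
  have "L v = L (x *\<^sub>R (1, 0) + y *\<^sub>R (0, 1))"
    by (simp add: v)
  also have "\<dots> = x *\<^sub>R L (1, 0) + y *\<^sub>R L (0, 1)"
    by (simp only: linear_add[OF assms] linear_scale[OF assms])
  finally show "L v = matrix2 (fst (L (1, 0))) (fst (L (0, 1))) (snd (L (1, 0))) (snd (L (0, 1))) v"
    by (simp add: v matrix2_apply prod_eq_iff algebra_simps)
qed

lemma det_matrix2_nonzero: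
  assumes "inj (matrix2 a b c d)"
  shows "a * d - b * c \<noteq> 0"
proof
  assume det: "a * d - b * c = 0"
  have "matrix2 a b c d (-b, a) = matrix2 a b c d (0, 0)"
    "matrix2 a b c d (-d, c) = matrix2 a b c d (0, 0)"
    using det by (simp_all add: matrix2_apply algebra_simps)
  then have "a = 0 \<and> b = 0" "c = 0 \<and> d = 0"
    using assms by (simp_all add: inj_eq)
  then have "matrix2 a b c d (1, 0) = matrix2 a b c d (0, 0)"
    by (simp add: matrix2_apply)
  then show False
    using assms by (simp add: inj_eq)
qed

lemma inv_matrix2:
  assumes "a * d - b * c \<noteq> 0"
  defines "D \<equiv> a * d - b * c"
  shows "inv (matrix2 a b c d) = matrix2 (d / D) (- b / D) (- c / D) (a / D)"
proof (rule inv_unique_comp)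
  have "D \<noteq> 0"
    using assms by simp
  then show "matrix2 a b c d \<circ> matrix2 (d / D) (- b / D) (- c / D) (a / D) = id"
    "matrix2 (d / D) (- b / D) (- c / D) (a / D) \<circ> matrix2 a b c d = id"
    by (simp_all add: fun_eq_iff matrix2_def divide_simps) (simp_all add: D_def algebra_simps)
qed

lemma swap_matrix2_swap: "prod.swap (matrix2 a b c d (prod.swap v)) = matrix2 d c b a v"
  by (simp add: matrix2_def case_prod_beta add.commute)

lemma maxnorm_swap: "maxnorm (prod.swap v) = maxnorm v"
  by (simp add: maxnorm_def max.commute)

lemma swap_in_cone_u_iff: "prod.swap v \<in> cone_u \<alpha> \<longleftrightarrow> v \<in> cone_s \<alpha>"
  by (simp add: cone_u_def cone_s_def)

lemma maxnorm_cone_u: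
  assumes "v \<in> cone_u \<alpha>" "\<alpha> \<le> 1"
  shows "maxnorm v = \<bar>fst v\<bar>"
proof -
  have "\<alpha> * \<bar>fst v\<bar> \<le> \<bar>fst v\<bar>"
    using mult_right_mono[OF assms(2) abs_ge_zero] by simp
  with assms(1) show ?thesis
    by (simp add: maxnorm_def cone_u_def)
qed

lemma abs_combination_lower_bound:
  fixes a b x y \<alpha> :: real
  assumes "\<bar>y\<bar> \<le> \<alpha> * \<bar>x\<bar>"
  shows "(\<bar>a\<bar> - \<alpha> * \<bar>b\<bar>) * \<bar>x\<bar> \<le> \<bar>a * x + b * y\<bar>"
proof -
  have "\<bar>b * y\<bar> \<le> \<bar>b\<bar> * (\<alpha> * \<bar>x\<bar>)"
    using assms by (simp add: abs_mult mult_left_mono)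
  moreover have "\<bar>a * x\<bar> \<le> \<bar>a * x + b * y\<bar> + \<bar>b * y\<bar>"
    using abs_triangle_ineq4[of "a * x + b * y" "b * y"] by simp
  ultimately show ?thesis
    by (simp add: abs_mult algebra_simps)
qed

lemma abs_combination_upper_bound:
  fixes a b x y \<alpha> :: real
  assumes "\<bar>y\<bar> \<le> \<alpha> * \<bar>x\<bar>"
  shows "\<bar>a * x + b * y\<bar> \<le> (\<bar>a\<bar> + \<alpha> * \<bar>b\<bar>) * \<bar>x\<bar>"
proof -
  have "\<bar>b * y\<bar> \<le> \<bar>b\<bar> * (\<alpha> * \<bar>x\<bar>)"
    using assms by (simp add: abs_mult mult_left_mono)
  moreover have "\<bar>a * x + b * y\<bar> \<le> \<bar>a * x\<bar> + \<bar>b * y\<bar>"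
    by (rule abs_triangle_ineq)
  ultimately show ?thesis
    by (simp add: abs_mult algebra_simps)
qed

lemma matrix2_cone_u_expanding:
  assumes "0 \<le> \<alpha>" "\<alpha> \<le> 1"
    and invariant: "\<bar>c\<bar> + \<alpha> * \<bar>d\<bar> + \<alpha>\<^sup>2 * \<bar>b\<bar> \<le> \<alpha> * \<bar>a\<bar>"
    and expanding: "K \<le> \<bar>a\<bar> - \<alpha> * \<bar>b\<bar>"
    and v: "v \<in> cone_u \<alpha>"
  shows "matrix2 a b c d v \<in> cone_u \<alpha> \<and> K * maxnorm v \<le> maxnorm (matrix2 a b c d v)"
proof -
  obtain x y where xy: "v = (x, y)" by (cases v)
  have y: "\<bar>y\<bar> \<le> \<alpha> * \<bar>x\<bar>"
    using v by (simp add: xy cone_u_def)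
  have first: "(\<bar>a\<bar> - \<alpha> * \<bar>b\<bar>) * \<bar>x\<bar> \<le> \<bar>a * x + b * y\<bar>"
    using abs_combination_lower_bound[OF y] .
  have "\<bar>c * x + d * y\<bar> \<le> (\<bar>c\<bar> + \<alpha> * \<bar>d\<bar>) * \<bar>x\<bar>"
    using abs_combination_upper_bound[OF y] .
  also have "\<dots> \<le> (\<alpha> * (\<bar>a\<bar> - \<alpha> * \<bar>b\<bar>)) * \<bar>x\<bar>"
    using invariant by (intro mult_right_mono) (simp_all add: power2_eq_square algebra_simps)
  also have "\<dots> = \<alpha> * ((\<bar>a\<bar> - \<alpha> * \<bar>b\<bar>) * \<bar>x\<bar>)"
    by (rule mult.assoc)
  also have "\<dots> \<le> \<alpha> * \<bar>a * x + b * y\<bar>"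
    using first assms(1) by (rule mult_left_mono)
  finally have "matrix2 a b c d v \<in> cone_u \<alpha>"
    by (simp add: xy matrix2_apply cone_u_def)
  moreover have "K * maxnorm v \<le> maxnorm (matrix2 a b c d v)"
  proof -
    have "K * maxnorm v = K * \<bar>x\<bar>"
      using maxnorm_cone_u[OF v assms(2)] by (simp add: xy)
    also have "\<dots> \<le> (\<bar>a\<bar> - \<alpha> * \<bar>b\<bar>) * \<bar>x\<bar>"
      using expanding by (simp add: mult_right_mono)
    also have "\<dots> \<le> maxnorm (matrix2 a b c d v)"
      using first by (simp add: xy matrix2_apply maxnorm_def le_max_iff_disj)
    finally show ?thesis .
  qed
  ultimately show ?thesis ..
qed

lemma inv_matrix2_cone_s_expanding:
  assumes "0 \<le> \<alpha>" "\<alpha> \<le> 1"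
    and det: "a * d - b * c \<noteq> 0"
    and invariant: "\<bar>b\<bar> + \<alpha> * \<bar>d\<bar> + \<alpha>\<^sup>2 * \<bar>c\<bar> \<le> \<alpha> * \<bar>a\<bar>"
    and expanding: "\<bar>a * d - b * c\<bar> * K \<le> \<bar>a\<bar> - \<alpha> * \<bar>c\<bar>"
    and v: "v \<in> cone_s \<alpha>"
  shows "inv (matrix2 a b c d) v \<in> cone_s \<alpha> \<and> K * maxnorm v \<le> maxnorm (inv (matrix2 a b c d) v)"
proof -
  define D where "D = a * d - b * c"
  let ?M = "matrix2 (a / D) (- c / D) (- b / D) (d / D)"
  have D: "\<bar>D\<bar> > 0"
    using det by (simp add: D_def)
  have inv_eq: "inv (matrix2 a b c d) v = prod.swap (?M (prod.swap v))"
    unfolding swap_matrix2_swap inv_matrix2[OF det] D_def ..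
  have M_invariant: "\<bar>- b / D\<bar> + \<alpha> * \<bar>d / D\<bar> + \<alpha>\<^sup>2 * \<bar>- c / D\<bar> \<le> \<alpha> * \<bar>a / D\<bar>"
    using divide_right_mono[OF invariant, of "\<bar>D\<bar>"] by (simp add: add_divide_distrib)
  have M_expanding: "K \<le> \<bar>a / D\<bar> - \<alpha> * \<bar>- c / D\<bar>"
    using divide_right_mono[OF expanding, of "\<bar>D\<bar>"] D by (simp add: diff_divide_distrib D_def)
  have "?M (prod.swap v) \<in> cone_u \<alpha> \<and> K * maxnorm (prod.swap v) \<le> maxnorm (?M (prod.swap v))"
    using v by (intro matrix2_cone_u_expanding assms(1,2) M_invariant M_expanding)
      (simp add: swap_in_cone_u_iff)
  then show ?thesis
    by (simp add: inv_eq maxnorm_swap flip: swap_in_cone_u_iff)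
qed

theorem proposition2p1:
  fixes \<alpha> K0 :: real
    and F :: "real \<times> real \<Rightarrow> real \<times> real"
    and F' :: "real \<times> real \<Rightarrow> ((real \<times> real) \<Rightarrow>\<^sub>L (real \<times> real))"
    and z :: "real \<times> real" and S :: "(real \<times> real) set"
    and F1x F1y F2x F2y :: real
  assumes alpha: "0 < \<alpha>" "\<alpha> < 1"
    and K0: "K0 > 1"
    and S: "open S" "z \<in> S"
    and deriv: "\<And>w. w \<in> S \<Longrightarrow> (F has_derivative blinfun_apply (F' w)) (at w)"
    and C1: "continuous_on S F'"
    and inv: "bij (blinfun_apply (F' z))"
    and F1x: "F1x = fst (blinfun_apply (F' z) (1, 0))"
    and F2x: "F2x = snd (blinfun_apply (F' z) (1, 0))"
    and F1y: "F1y = fst (blinfun_apply (F' z) (0, 1))"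
    and F2y: "F2y = snd (blinfun_apply (F' z) (0, 1))"
    and H1: "\<bar>F2x\<bar> + \<alpha> * \<bar>F2y\<bar> + \<alpha>\<^sup>2 * \<bar>F1y\<bar> \<le> \<alpha> * \<bar>F1x\<bar>"
    and H2: "\<bar>F1x\<bar> - \<alpha> * \<bar>F1y\<bar> \<ge> K0"
    and H3: "\<bar>F1y\<bar> + \<alpha> * \<bar>F2y\<bar> + \<alpha>\<^sup>2 * \<bar>F2x\<bar> \<le> \<alpha> * \<bar>F1x\<bar>"
    and H4: "\<bar>F1x\<bar> - \<alpha> * \<bar>F2x\<bar> \<ge> \<bar>F1x * F2y - F1y * F2x\<bar> * K0"
  shows "blinfun_apply (F' z) ` cone_u \<alpha> \<subseteq> cone_u \<alpha> \<and>
    (\<forall>v \<in> cone_u \<alpha>. maxnorm (blinfun_apply (F' z) v) \<ge> K0 * maxnorm v) \<and>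
    inv (blinfun_apply (F' z)) ` cone_s \<alpha> \<subseteq> cone_s \<alpha> \<and>
    (\<forall>v \<in> cone_s \<alpha>. maxnorm (inv (blinfun_apply (F' z)) v) \<ge> K0 * maxnorm v)"
proof -
  have DF: "blinfun_apply (F' z) = matrix2 F1x F1y F2x F2y"
    unfolding F1x F1y F2x F2y
    by (intro linear_eq_matrix2 bounded_linear.linear blinfun.bounded_linear_right)
  have det: "F1x * F2y - F1y * F2x \<noteq> 0"
    using inv by (intro det_matrix2_nonzero) (simp add: DF bij_is_inj)
  have "matrix2 F1x F1y F2x F2y v \<in> cone_u \<alpha> \<and> K0 * maxnorm v \<le> maxnorm (matrix2 F1x F1y F2x F2y v)"
    if "v \<in> cone_u \<alpha>" for v
    using alpha H1 H2 that by (intro matrix2_cone_u_expanding) simp_all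
  moreover have "inv (matrix2 F1x F1y F2x F2y) v \<in> cone_s \<alpha> \<and>
      K0 * maxnorm v \<le> maxnorm (inv (matrix2 F1x F1y F2x F2y) v)"
    if "v \<in> cone_s \<alpha>" for v
    using alpha det H3 H4 that by (intro inv_matrix2_cone_s_expanding) simp_all
  ultimately show ?thesis
    by (auto simp: DF)
qed

end
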